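(* Let $\mathcal U_1,\mathcal U_2$ be essential covers of $X$, let $f\colon X\to X$ be a map, and let $\mathcal F_1\colon\mathcal U_1\multimap\mathcal U_1$ be a representation of $f$. If $\mathcal R^-(\mathcal U_2)>\mathcal R^+(\mathcal F_1)$, then every representation $\mathcal F_2\colon\mathcal U_2\multimap\mathcal U_2$ of $f$ is coarser than $\mathcal F_1$ (i.e. $\mathcal F_1$ is finer than $\mathcal F_2$).
   Context: $X$ is a nonempty metric space with bounded metric $d$; $B(x,r)=\{y\in X:d(x,y)<r\}$ for $r>0$ and $B(x,0)=\{x\}$. For a family $\mathcal A$ of subsets of $X$, $|\mathcal A|:=\bigcup_{A\in\mathcal A}A$. A cover of $X$ is a finite family $\mathcal U$ of open subsets of $X$ with $|\mathcal U|=X$. A cover $\mathcal U$ is essential if there is $\varepsilon>0$ such that every $U\in\mathcal U$ contains a point $x$ with $B(x,\varepsilon)\subset U$ and $B(x,\varepsilon)\cap W=\emptyset$ for all $W\in\mathcal U\setminus\{U\}$. Inner resolution: $\mathcal R^-(\mathcal U)=\sup\{d\ge0:\forall x\in X\ \exists U\in\mathcal U:\ B(x,d)\subset U\}$. $\mathcal U_1\prec\mathcal U_2$ means every element of $\mathcal U_1$ is contained in some element of $\mathcal U_2$ and every element of $\mathcal U_2$ contains some element of $\mathcal U_1$. A combinatorial map $\mathcal F\colon\mathcal U\multimap\mathcal U$ assigns to each $U\in\mathcal U$ a subset $\mathcal F(U)\subset\mathcal U$; it is a representation of $f$ if $\mathcal F(U)\supseteq\{W\in\mathcal U:W\cap f(U)\neq\emptyset\}$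 for all $U$. $\mathcal R^+(\mathcal F)=\max\{\operatorname{diam}U,\operatorname{diam}|\mathcal F(U)|:U\in\mathcal U\}$. $\mathcal F_1\colon\mathcal U_1\multimap\mathcal U_1$ is finer than $\mathcal F_2\colon\mathcal U_2\multimap\mathcal U_2$ if $\mathcal U_1\prec\mathcal U_2$ and for every $U_1\in\mathcal U_1$ and every $U_2\in\mathcal U_2$ with $U_1\subset U_2$, every element of $\mathcal F_1(U_1)$ is contained in some element of $\mathcal F_2(U_2)$. *)

theory Defs
  imports "HOL-Analysis.Analysis"
begin

definition Bl :: "'a::metric_space \<Rightarrow> real \<Rightarrow> 'a set" where
  "Bl x r = (if r = 0 then {x} else ball x r)"

definition fam_union :: "'a set set \<Rightarrow> 'a set" where
  "fam_union A = \<Union>A"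

definition is_cover :: "'a::metric_space set set \<Rightarrow> bool" where
  "is_cover \<U> \<longleftrightarrow> finite \<U> \<and> (\<forall>U\<in>\<U>. open U) \<and> fam_union \<U> = UNIV"

definition essential_cover :: "'a::metric_space set set \<Rightarrow> bool" where
  "essential_cover \<U> \<longleftrightarrow> is_cover \<U> \<and>
     (\<exists>\<epsilon>>0. \<forall>U\<in>\<U>. \<exists>x. Bl x \<epsilon> \<subseteq> U \<and> (\<forall>W\<in>\<U> - {U}. Bl x \<epsilon> \<inter> W = {}))"

text \<open>Inner resolution, valued in the extended reals (it may be +\<infinity>).\<close>
definition inner_res :: "'a::metric_space set set \<Rightarrow> ereal" where
  "inner_res \<U> = Sup (ereal ` {d. d \<ge> 0 \<and> (\<forall>x. \<exists>U\<in>\<U>. Bl x d \<subseteq> U)})"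

definition cover_prec :: "'a set set \<Rightarrow> 'a set set \<Rightarrow> bool" where
  "cover_prec \<U>1 \<U>2 \<longleftrightarrow> (\<forall>U1\<in>\<U>1. \<exists>U2\<in>\<U>2. U1 \<subseteq> U2) \<and> (\<forall>U2\<in>\<U>2. \<exists>U1\<in>\<U>1. U1 \<subseteq> U2)"

definition comb_map :: "'a set set \<Rightarrow> ('a set \<Rightarrow> 'a set set) \<Rightarrow> bool" where
  "comb_map \<U> F \<longleftrightarrow> (\<forall>U\<in>\<U>. F U \<subseteq> \<U>)"

definition is_representation :: "'a set set \<Rightarrow> ('a set \<Rightarrow> 'a set set) \<Rightarrow> ('a \<Rightarrow> 'a) \<Rightarrow> bool" where
  "is_representation \<U> F f \<longleftrightarrow> comb_map \<U> F \<and>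
     (\<forall>U\<in>\<U>. {W\<in>\<U>. W \<inter> f ` U \<noteq> {}} \<subseteq> F U)"

definition outer_res :: "'a::metric_space set set \<Rightarrow> ('a set \<Rightarrow> 'a set set) \<Rightarrow> real" where
  "outer_res \<U> F = Max ((\<lambda>U. diameter U) ` \<U> \<union> (\<lambda>U. diameter (fam_union (F U))) ` \<U>)"

definition finer :: "'a set set \<Rightarrow> ('a set \<Rightarrow> 'a set set) \<Rightarrow> 'a set set \<Rightarrow> ('a set \<Rightarrow> 'a set set) \<Rightarrow> bool" where
  "finer \<U>1 F1 \<U>2 F2 \<longleftrightarrow> cover_prec \<U>1 \<U>2 \<and>
     (\<forall>U1\<in>\<U>1. \<forall>U2\<in>\<U>2. U1 \<subseteq> U2 \<longrightarrow> (\<forall>V\<in>F1 U1. \<exists>W\<in>F2 U2. V \<subseteq> W))"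

end

theory Submission
  imports Defs
begin

(* Put R = R^+(F1) < R^-(U2).  Every element U1 of U1 and every
   union |F1(U1)| is a nonempty set of diameter at most R, and any nonempty
   bounded set of diameter below R^-(U2) lies in a single element of U2
   (it sits inside a ball B(x,d) with d < R^-(U2)).  This gives the first
   half of U1 \<prec> U2; the second half uses that each element of the
   essential cover U2 owns a private point, and the element of U2 containing
   the U1-element around that point must be the given one.  Finally, if
   U1 \<subseteq> U2 and y \<in> U1, the set |F1(U1)| contains f y and lies in some
   W \<in> U2; W meets f(U2), so W \<in> F2(U2) for every representation F2. *)

lemma inner_res_witness:
  assumes "ereal r < inner_res \<U>"
  obtains d where "d \<ge> 0" "r < d" "\<forall>x. \<exists>U\<in>\<U>. Bl x d \<subseteq> U"
  using assms unfolding inner_res_def by (auto simp: less_Sup_iff)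

lemma small_set_in_cover_element:
  fixes S :: "'a::metric_space set"
  assumes "bounded S" and "x \<in> S" and "diameter S \<le> r" and "ereal r < inner_res \<U>"
  shows "\<exists>W\<in>\<U>. S \<subseteq> W"
proof -
  obtain d where d: "d \<ge> 0" "r < d" "\<forall>x. \<exists>U\<in>\<U>. Bl x d \<subseteq> U"
    using inner_res_witness[OF assms(4)] by blast
  then obtain W where W: "W \<in> \<U>" "Bl x d \<subseteq> W" by blast
  have "S \<subseteq> Bl x d"
  proof
    fix y assume "y \<in> S"
    have "dist x y \<le> diameter S"
      using diameter_bounded_bound[OF assms(1)] assms(2) \<open>y \<in> S\<close> by blast
    with d assms(3) have "dist x y < d" by linarith
    then show "y \<in> Bl x d" by (auto simp: Bl_def dist_commute)
  qed
  with W show ?thesis by blast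
qed

lemma outer_res_bounds:
  assumes "finite \<U>" and "U \<in> \<U>"
  shows "diameter U \<le> outer_res \<U> F" and "diameter (\<Union>(F U)) \<le> outer_res \<U> F"
  using assms unfolding outer_res_def fam_union_def by (auto intro: Max_ge)

lemma essential_cover_private_point:
  assumes "essential_cover \<U>" and "U \<in> \<U>"
  obtains x where "x \<in> U" "\<forall>W\<in>\<U> - {U}. x \<notin> W"
proof -
  obtain e where "e > 0" and e: "\<forall>U\<in>\<U>. \<exists>x. Bl x e \<subseteq> U \<and> (\<forall>W\<in>\<U> - {U}. Bl x e \<inter> W = {})"
    using assms(1) unfolding essential_cover_def by auto
  then obtain x where x: "Bl x e \<subseteq> U" "\<forall>W\<in>\<U> - {U}. Bl x e \<inter> W = {}"
    using assms(2) by blast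
  have centre: "x \<in> Bl x e" using \<open>e > 0\<close> by (simp add: Bl_def)
  show thesis
  proof (rule that)
    show "x \<in> U" using x(1) centre by blast
    show "\<forall>W\<in>\<U> - {U}. x \<notin> W" using x(2) centre by blast
  qed
qed

lemma cover_prec_of_essential:
  assumes covers: "\<Union>\<U>1 = UNIV"
    and refines: "\<forall>V\<in>\<U>1. \<exists>W\<in>\<U>2. V \<subseteq> W"
    and ess: "essential_cover \<U>2"
  shows "cover_prec \<U>1 \<U>2"
  unfolding cover_prec_def
proof (intro conjI refines ballI)
  fix U assume "U \<in> \<U>2"
  then obtain x where "x \<in> U" and own: "\<forall>W\<in>\<U>2 - {U}. x \<notin> W"
    using essential_cover_private_point[OF ess] by blast
  have "x \<in> \<Union>\<U>1" using covers by simp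
  then obtain V where V: "V \<in> \<U>1" "x \<in> V" by blast
  then obtain W where W: "W \<in> \<U>2" "V \<subseteq> W" using refines by blast
  have "W = U"
  proof (rule ccontr)
    assume "W \<noteq> U"
    with W(1) own have "x \<notin> W" by blast
    with V(2) W(2) show False by blast
  qed
  with V W show "\<exists>V\<in>\<U>1. V \<subseteq> U" by blast
qed

lemma representation_image_mem:
  assumes "is_representation \<U> F f" and "\<Union>\<U> = UNIV" and "U \<in> \<U>" and "y \<in> U"
  shows "f y \<in> \<Union>(F U)"
proof -
  have "f y \<in> \<Union>\<U>" using assms(2) by simp
  then obtain V where "V \<in> \<U>" "f y \<in> V" by blast
  with assms(1,3,4) have "V \<in> F U" unfolding is_representation_def by blast
  with \<open>f y \<in> V\<close> show ?thesis by blast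
qed

theorem mainTheorem4:
  fixes \<U>1 \<U>2 :: "'a::metric_space set set"
    and f :: "'a \<Rightarrow> 'a"
    and F1 :: "'a set \<Rightarrow> 'a set set"
  assumes bdd: "bounded (UNIV :: 'a set)"
    and ess1: "essential_cover \<U>1"
    and ess2: "essential_cover \<U>2"
    and rep1: "is_representation \<U>1 F1 f"
    and res: "inner_res \<U>2 > ereal (outer_res \<U>1 F1)"
  shows "\<forall>F2. is_representation \<U>2 F2 f \<longrightarrow> finer \<U>1 F1 \<U>2 F2"
proof (intro allI impI)
  fix F2 assume rep2: "is_representation \<U>2 F2 f"
  have fin1: "finite \<U>1" and un1: "\<Union>\<U>1 = UNIV"
    using ess1 by (auto simp: essential_cover_def is_cover_def fam_union_def)
  have small: "\<exists>W\<in>\<U>2. S \<subseteq> W" if "diameter S \<le> outer_res \<U>1 F1" "x \<in> S" for S x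
    using small_set_in_cover_element[OF bounded_subset[OF bdd] \<open>x \<in> S\<close> that(1) res] by blast
  have refines: "\<forall>V\<in>\<U>1. \<exists>W\<in>\<U>2. V \<subseteq> W"
  proof
    fix V assume "V \<in> \<U>1"
    then obtain x where "x \<in> V" using essential_cover_private_point[OF ess1] by blast
    then show "\<exists>W\<in>\<U>2. V \<subseteq> W" using small outer_res_bounds(1)[OF fin1 \<open>V \<in> \<U>1\<close>] by blast
  qed
  show "finer \<U>1 F1 \<U>2 F2"
    unfolding finer_def
  proof (intro conjI cover_prec_of_essential[OF un1 refines ess2] ballI impI)
    fix U1 U2 V assume U1: "U1 \<in> \<U>1" and U2: "U2 \<in> \<U>2" and "U1 \<subseteq> U2" and V: "V \<in> F1 U1"
    obtain y where "y \<in> U1" using essential_cover_private_point[OF ess1 U1] by blast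
    have fy: "f y \<in> \<Union>(F1 U1)" by (rule representation_image_mem[OF rep1 un1 U1 \<open>y \<in> U1\<close>])
    then obtain W where W: "W \<in> \<U>2" "\<Union>(F1 U1) \<subseteq> W"
      using small[OF outer_res_bounds(2)[OF fin1 U1]] by blast
    have "W \<in> F2 U2"
      using rep2 U2 W fy \<open>y \<in> U1\<close> \<open>U1 \<subseteq> U2\<close> unfolding is_representation_def by blast
    with W V show "\<exists>W\<in>F2 U2. V \<subseteq> W" by blast
  qed
qed

end
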